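(* Among all $3\times3$ unimodular zerofree matrices $M$, the minimum of $\|(M\;M^{-1})\|$ is $3$. There are exactly $576$ minimizers, and all of them are equivalent to $$M=\begin{pmatrix}1&2&2\\2&1&2\\2&2&3\end{pmatrix},\qquad M^{-1}=\begin{pmatrix}1&2&-2\\2&1&-2\\-2&-2&3\end{pmatrix}.$$
   Context: A square integer matrix is unimodular if its determinant is $\pm1$. An invertible matrix $Z$ is zerofree if none of the entries of $Z$ and none of the entries of $Z^{-1}$ is zero. For a matrix $A$, $\|A\|$ denotes the maximum of the absolute values of its entries. $(M\;M^{-1})$ denotes the $n\times 2n$ matrix obtained by concatenating $M$ and $M^{-1}$ side by side. Two $n\times n$ matrices $Z,Z'$ are equivalent if $Z'=PZQ$ for some $n\times n$ signed permutation matrices $P,Q$ (permutation matrices whose nonzero entries may be $\pm1$). *)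

theory Defs
  imports "HOL-Analysis.Analysis"
begin

definition unimodular :: "int^'n^'n \<Rightarrow> bool" where
  "unimodular M \<longleftrightarrow> det M = 1 \<or> det M = -1"

definition zerofree :: "'a::comm_ring_1^'n^'n \<Rightarrow> bool" where
  "zerofree Z \<longleftrightarrow> invertible Z \<and> (\<forall>i j. Z $ i $ j \<noteq> 0) \<and> (\<forall>i j. matrix_inv Z $ i $ j \<noteq> 0)"

definition concat_norm :: "int^'n^'n \<Rightarrow> int" where
  "concat_norm M = Max ({\<bar>M $ i $ j\<bar> | i j. True} \<union> {\<bar>matrix_inv M $ i $ j\<bar> | i j. True})"

definition signed_perm_matrix :: "'a::ring_1^'n^'n \<Rightarrow> bool" where
  "signed_perm_matrix P \<longleftrightarrow>
     (\<exists>p s. bij p \<and> (\<forall>i. s i = 1 \<or> s i = -1) \<and>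
            (\<forall>i j. P $ i $ j = (if j = p i then s i else 0)))"

definition mat_equivalent :: "'a::ring_1^'n^'n \<Rightarrow> 'a^'n^'n \<Rightarrow> bool" where
  "mat_equivalent Z Z' \<longleftrightarrow> (\<exists>P Q. signed_perm_matrix P \<and> signed_perm_matrix Q \<and> Z' = P ** Z ** Q)"

definition M0 :: "int^3^3" where
  "M0 = vector [vector [1,2,2], vector [2,1,2], vector [2,2,3]]"

definition M0inv :: "int^3^3" where
  "M0inv = vector [vector [1,2,-2], vector [2,1,-2], vector [-2,-2,3]]"

end

theory Submission
  imports Defs
begin

(*
  Multiplying by signed permutation matrices only permutes entries and flips their signs, and
  the inverse of P Z Q is Q^T Z^-1 P^T; so equivalence preserves unimodularity, zerofreeness and
  the norm. Rescaling rows and columns by signs, every zerofree M is equivalent to a matrix with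
  positive first row and column. For a unimodular 3x3 matrix the inverse is plus or minus the
  adjugate, so norm at most 3 forces every entry and every 2x2 minor into {-3, ..., 3} - {0}; an
  exhaustive search over such normalised matrices finds only row and column permutations of M0,
  whose norm is 3. These are 18 distinct positive matrices, and the 2^5 independent sign
  rescalings of each (the sign of the first row being fixed) are pairwise distinct: 576 in all.
*)

section \<open>Signed permutation matrices and equivalence\<close>

lemma matrix_inv_eqI:
  fixes A B :: "'a::semiring_1^'n^'n"
  assumes "A ** B = mat 1" "B ** A = mat 1"
  shows "matrix_inv A = B"
proof -
  have inv: "A ** matrix_inv A = mat 1 \<and> matrix_inv A ** A = mat 1"
    unfolding matrix_inv_def by (rule someI[of _ B]) (use assms in blast)
  have "matrix_inv A = (B ** A) ** matrix_inv A" by (simp add: assms)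
  also have "\<dots> = B" by (simp add: inv flip: matrix_mul_assoc)
  finally show ?thesis .
qed

lemma invertible_matrix_inv:
  fixes A :: "'a::semiring_1^'n^'n"
  assumes "invertible A"
  shows "A ** matrix_inv A = mat 1" "matrix_inv A ** A = mat 1"
  using someI_ex[OF assms[unfolded invertible_def]] by (simp_all add: matrix_inv_def)

lemma signed_perm_matrix_mult_nth:
  fixes P A :: "'a::ring_1^'n^'n"
  assumes "\<forall>i k. P $ i $ k = (if k = p i then s i else 0)"
  shows "(P ** A) $ i $ j = s i * A $ p i $ j"
  by (simp add: matrix_matrix_mult_def assms if_distrib[of "\<lambda>x. x * _"] cong: if_cong)

lemma matrix_mult_signed_perm_nth:
  fixes Q A :: "'a::ring_1^'n^'n"
  assumes "bij q" "\<forall>k j. Q $ k $ j = (if j = q k then t k else 0)"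
  shows "(A ** Q) $ i $ j = A $ i $ inv q j * t (inv q j)"
proof -
  have "\<And>k. (j = q k) = (k = inv q j)" using assms(1) by (metis bij_inv_eq_iff)
  then show ?thesis
    by (simp add: matrix_matrix_mult_def assms(2) if_distrib[of "\<lambda>x. _ * x"] cong: if_cong)
qed

lemma signed_perm_matrix_transpose:
  fixes P :: "'a::ring_1^'n^'n"
  assumes "signed_perm_matrix P"
  shows "signed_perm_matrix (transpose P)"
proof -
  obtain p s where p: "bij p" "\<forall>i. s i = 1 \<or> s i = -1"
      "\<forall>i j. P $ i $ j = (if j = p i then s i else 0)"
    using assms unfolding signed_perm_matrix_def by blast
  have "transpose P $ i $ j = (if j = inv p i then s (inv p i) else 0)" for i j
    using p(1,3) by (auto simp: transpose_def bij_inv_eq_iff bij_is_inj)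
  with p(1,2) show ?thesis
    unfolding signed_perm_matrix_def
    by (intro exI[of _ "inv p"] exI[of _ "s \<circ> inv p"]) (simp add: bij_imp_bij_inv)
qed

lemma signed_perm_matrix_mult:
  fixes P Q :: "'a::ring_1^'n^'n"
  assumes "signed_perm_matrix P" "signed_perm_matrix Q"
  shows "signed_perm_matrix (P ** Q)"
proof -
  obtain p s where p: "bij p" "\<forall>i. s i = 1 \<or> s i = -1"
      "\<forall>i j. P $ i $ j = (if j = p i then s i else 0)"
    using assms(1) unfolding signed_perm_matrix_def by blast
  obtain q t where q: "bij q" "\<forall>i. t i = 1 \<or> t i = -1"
      "\<forall>i j. Q $ i $ j = (if j = q i then t i else 0)"
    using assms(2) unfolding signed_perm_matrix_def by blast
  have "(P ** Q) $ i $ j = (if j = q (p i) then s i * t (p i) else 0)" for i j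
    by (simp add: signed_perm_matrix_mult_nth[OF p(3)] q(3))
  moreover have "\<forall>i. s i * t (p i) = 1 \<or> s i * t (p i) = -1"
    using p(2) q(2) by (metis mult_1 mult_minus1 minus_minus)
  ultimately show ?thesis
    unfolding signed_perm_matrix_def using bij_comp[OF p(1) q(1)]
    by (intro exI[of _ "q \<circ> p"] exI[of _ "\<lambda>i. s i * t (p i)"]) simp
qed

lemma signed_perm_matrix_mult_transpose:
  fixes P :: "'a::ring_1^'n^'n"
  assumes "signed_perm_matrix P"
  shows "P ** transpose P = mat 1"
proof -
  obtain p s where p: "bij p" "\<forall>i. s i = 1 \<or> s i = -1"
      "\<forall>i j. P $ i $ j = (if j = p i then s i else 0)"
    using assms unfolding signed_perm_matrix_def by blast
  have "s i * s i = 1" for i using p(2) by (metis mult_1 mult_minus1 minus_minus)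
  with p(1) show ?thesis
    by (auto simp: vec_eq_iff mat_def signed_perm_matrix_mult_nth[OF p(3)] transpose_def p(3)
        bij_is_inj inj_eq)
qed

lemma signed_perm_matrix_transpose_mult:
  fixes P :: "'a::ring_1^'n^'n"
  assumes "signed_perm_matrix P"
  shows "transpose P ** P = mat 1"
  using signed_perm_matrix_mult_transpose[OF signed_perm_matrix_transpose[OF assms]] by simp

lemma det_signed_perm_matrix:
  fixes P :: "'a::idom^'n^'n"
  assumes "signed_perm_matrix P"
  shows "det P = 1 \<or> det P = -1"
proof -
  have "det P * det P = 1"
    using det_mul[of P "transpose P"] by (simp add: signed_perm_matrix_mult_transpose[OF assms])
  then show ?thesis by (simp add: square_eq_1_iff)
qed

lemma mat_equivalent_iff:
  fixes Z Z' :: "'a::comm_ring_1^'n^'n"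
  shows "mat_equivalent Z Z' \<longleftrightarrow>
    (\<exists>p q s t. bij p \<and> bij q \<and> (\<forall>i. s i = 1 \<or> s i = -1) \<and> (\<forall>j. t j = 1 \<or> t j = -1) \<and>
       (\<forall>i j. Z' $ i $ j = s i * t j * Z $ p i $ q j))"
  (is "_ \<longleftrightarrow> ?reindexed")
proof
  assume "mat_equivalent Z Z'"
  then obtain P Q where PQ: "signed_perm_matrix P" "signed_perm_matrix Q" "Z' = P ** Z ** Q"
    unfolding mat_equivalent_def by blast
  obtain p s where p: "bij p" "\<forall>i. s i = 1 \<or> s i = -1"
      "\<forall>i j. P $ i $ j = (if j = p i then s i else 0)"
    using PQ(1) unfolding signed_perm_matrix_def by blast
  obtain q t where q: "bij q" "\<forall>i. t i = 1 \<or> t i = -1"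
      "\<forall>i j. Q $ i $ j = (if j = q i then t i else 0)"
    using PQ(2) unfolding signed_perm_matrix_def by blast
  have "Z' $ i $ j = s i * t (inv q j) * Z $ p i $ inv q j" for i j
    by (simp add: PQ(3) matrix_mult_signed_perm_nth[OF q(1,3)] signed_perm_matrix_mult_nth[OF p(3)])
  with p(1,2) q(2) bij_imp_bij_inv[OF q(1)] show ?reindexed
    by (intro exI[of _ p] exI[of _ "inv q"] exI[of _ s] exI[of _ "t \<circ> inv q"]) simp
next
  assume ?reindexed
  then obtain p q s t where p: "bij p" "\<forall>i. s i = 1 \<or> s i = -1"
    and q: "bij q" "\<forall>j. t j = 1 \<or> t j = -1"
    and Z': "\<forall>i j. Z' $ i $ j = s i * t j * Z $ p i $ q j"
    by blast
  define P :: "'a^'n^'n" where "P = (\<chi> i k. if k = p i then s i else 0)"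
  define Q :: "'a^'n^'n" where "Q = (\<chi> k j. if j = inv q k then t (inv q k) else 0)"
  have P: "\<forall>i k. P $ i $ k = (if k = p i then s i else 0)" by (simp add: P_def)
  have Q: "\<forall>k j. Q $ k $ j = (if j = inv q k then t (inv q k) else 0)" by (simp add: Q_def)
  have "signed_perm_matrix P"
    unfolding signed_perm_matrix_def using p P by blast
  moreover have "signed_perm_matrix Q"
    unfolding signed_perm_matrix_def using q(2) Q bij_imp_bij_inv[OF q(1)]
    by (intro exI[of _ "inv q"] exI[of _ "\<lambda>k. t (inv q k)"]) simp
  moreover have "Z' = P ** Z ** Q"
  proof -
    have "(P ** Z ** Q) $ i $ j = s i * Z $ p i $ q j * t j" for i j
      using matrix_mult_signed_perm_nth[OF bij_imp_bij_inv[OF q(1)] Q, of "P ** Z" i j]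
      by (simp add: inv_inv_eq[OF q(1)] bij_is_inj[OF q(1)] signed_perm_matrix_mult_nth[OF P])
    then show ?thesis by (simp add: vec_eq_iff Z' mult_ac)
  qed
  ultimately show "mat_equivalent Z Z'"
    unfolding mat_equivalent_def by blast
qed

lemma mat_equivalent_sym:
  fixes Z Z' :: "'a::comm_ring_1^'n^'n"
  assumes "mat_equivalent Z Z'"
  shows "mat_equivalent Z' Z"
proof -
  obtain P Q where PQ: "signed_perm_matrix P" "signed_perm_matrix Q" "Z' = P ** Z ** Q"
    using assms unfolding mat_equivalent_def by blast
  have "transpose P ** Z' ** transpose Q = (transpose P ** P) ** Z ** (Q ** transpose Q)"
    by (simp add: PQ(3) matrix_mul_assoc)
  also have "\<dots> = Z"
    by (simp add: signed_perm_matrix_transpose_mult[OF PQ(1)]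
        signed_perm_matrix_mult_transpose[OF PQ(2)])
  finally show ?thesis
    unfolding mat_equivalent_def using PQ(1,2) signed_perm_matrix_transpose by metis
qed

lemma mat_equivalent_trans:
  fixes X Y Z :: "'a::ring_1^'n^'n"
  assumes "mat_equivalent X Y" "mat_equivalent Y Z"
  shows "mat_equivalent X Z"
proof -
  obtain P Q where PQ: "signed_perm_matrix P" "signed_perm_matrix Q" "Y = P ** X ** Q"
    using assms(1) unfolding mat_equivalent_def by blast
  obtain P' Q' where PQ': "signed_perm_matrix P'" "signed_perm_matrix Q'" "Z = P' ** Y ** Q'"
    using assms(2) unfolding mat_equivalent_def by blast
  have "Z = (P' ** P) ** X ** (Q ** Q')"
    by (simp add: PQ(3) PQ'(3) matrix_mul_assoc)
  then show ?thesis
    unfolding mat_equivalent_def using PQ PQ' signed_perm_matrix_mult by blast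
qed

lemma mat_equivalent_det:
  fixes Z Z' :: "'a::idom^'n^'n"
  assumes "mat_equivalent Z Z'"
  shows "det Z' = det Z \<or> det Z' = - det Z"
proof -
  obtain P Q where PQ: "signed_perm_matrix P" "signed_perm_matrix Q" "Z' = P ** Z ** Q"
    using assms unfolding mat_equivalent_def by blast
  then show ?thesis
    using det_signed_perm_matrix[OF PQ(1)] det_signed_perm_matrix[OF PQ(2)] by (auto simp: det_mul)
qed

lemma mat_equivalent_matrix_inv:
  fixes Z Z' :: "'a::comm_ring_1^'n^'n"
  assumes "mat_equivalent Z Z'" "invertible Z"
  shows "invertible Z'" "mat_equivalent (matrix_inv Z) (matrix_inv Z')"
proof -
  obtain P Q where PQ: "signed_perm_matrix P" "signed_perm_matrix Q" "Z' = P ** Z ** Q"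
    using assms(1) unfolding mat_equivalent_def by blast
  let ?W = "transpose Q ** matrix_inv Z ** transpose P"
  have "Z' ** ?W = P ** (Z ** (Q ** transpose Q) ** matrix_inv Z) ** transpose P"
    by (simp add: PQ(3) matrix_mul_assoc)
  also have "\<dots> = mat 1"
    by (simp add: signed_perm_matrix_mult_transpose PQ(1,2) invertible_matrix_inv[OF assms(2)])
  finally have right: "Z' ** ?W = mat 1" .
  have "?W ** Z' = transpose Q ** (matrix_inv Z ** (transpose P ** P) ** Z) ** Q"
    by (simp add: PQ(3) matrix_mul_assoc)
  also have "\<dots> = mat 1"
    by (simp add: signed_perm_matrix_transpose_mult PQ(1,2) invertible_matrix_inv[OF assms(2)])
  finally have left: "?W ** Z' = mat 1" .
  show "invertible Z'"
    unfolding invertible_def using left right by blast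
  show "mat_equivalent (matrix_inv Z) (matrix_inv Z')"
    unfolding mat_equivalent_def matrix_inv_eqI[OF right left]
    using PQ(1,2) signed_perm_matrix_transpose by blast
qed

lemma mat_equivalent_abs_entries:
  fixes Z Z' :: "'a::linordered_idom^'n^'n"
  assumes "mat_equivalent Z Z'"
  shows "{\<bar>Z' $ i $ j\<bar> | i j. True} = {\<bar>Z $ i $ j\<bar> | i j. True}"
proof -
  obtain p q s t where pq: "bij p" "bij q"
    and st: "\<forall>i. s i = 1 \<or> s i = -1" "\<forall>j. t j = 1 \<or> t j = -1"
    and Z': "\<forall>i j. Z' $ i $ j = s i * t j * Z $ p i $ q j"
    using assms unfolding mat_equivalent_iff by blast
  have "\<bar>s i\<bar> = 1" "\<bar>t j\<bar> = 1" for i j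
    using st by (metis abs_1 abs_minus_cancel)+
  then have abs_Z': "\<bar>Z' $ i $ j\<bar> = \<bar>Z $ p i $ q j\<bar>" for i j
    by (simp add: Z' abs_mult)
  have "\<bar>Z $ i $ j\<bar> = \<bar>Z' $ inv p i $ inv q j\<bar>" for i j
    by (simp add: abs_Z' surj_f_inv_f bij_is_surj pq)
  then show ?thesis
    using abs_Z' by blast
qed

lemma mat_equivalent_nonzero_entries:
  fixes Z Z' :: "'a::linordered_idom^'n^'n"
  assumes "mat_equivalent Z Z'" "\<forall>i j. Z $ i $ j \<noteq> 0"
  shows "\<forall>i j. Z' $ i $ j \<noteq> 0"
proof -
  have "0 \<notin> {\<bar>Z $ i $ j\<bar> | i j. True}" using assms(2) by auto
  then show ?thesis unfolding mat_equivalent_abs_entries[OF assms(1), symmetric] by force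
qed

lemma mat_equivalent_zerofree:
  fixes Z Z' :: "'a::linordered_idom^'n^'n"
  assumes "mat_equivalent Z Z'" "zerofree Z"
  shows "zerofree Z'"
  using assms mat_equivalent_matrix_inv[OF assms(1)] mat_equivalent_nonzero_entries
  unfolding zerofree_def by blast

lemma mat_equivalent_concat_norm:
  fixes Z Z' :: "int^'n^'n"
  assumes "mat_equivalent Z Z'" "invertible Z"
  shows "concat_norm Z' = concat_norm Z"
  unfolding concat_norm_def mat_equivalent_abs_entries[OF assms(1)]
    mat_equivalent_abs_entries[OF mat_equivalent_matrix_inv(2)[OF assms]] ..

lemma concat_norm_le_iff:
  fixes M :: "int^'n^'n"
  shows "concat_norm M \<le> c \<longleftrightarrow> (\<forall>i j. \<bar>M $ i $ j\<bar> \<le> c \<and> \<bar>matrix_inv M $ i $ j\<bar> \<le> c)"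
proof -
  have fin: "finite {F i j | i j. True}" for F :: "'n \<Rightarrow> 'n \<Rightarrow> int"
    using finite_image_set2[of "\<lambda>_. True" "\<lambda>_. True" F] by simp
  have ne: "{\<bar>M $ i $ j\<bar> | i j. True} \<union> {\<bar>matrix_inv M $ i $ j\<bar> | i j. True} \<noteq> {}"
    by blast
  show ?thesis
    unfolding concat_norm_def Max_le_iff[OF finite_UnI[OF fin fin] ne] ball_Un by blast
qed

lemma abs_entry_le_concat_norm:
  fixes M :: "int^'n^'n"
  shows "\<bar>M $ i $ j\<bar> \<le> concat_norm M"
  using concat_norm_le_iff[of M "concat_norm M"] by simp

lemma mat_equivalent_invariants:
  fixes Z Z' :: "int^'n^'n"
  assumes "mat_equivalent Z Z'" "unimodular Z" "zerofree Z"
  shows "unimodular Z'" "zerofree Z'" "concat_norm Z' = concat_norm Z"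
proof -
  show "unimodular Z'"
    using mat_equivalent_det[OF assms(1)] assms(2) by (auto simp: unimodular_def)
  show "zerofree Z'"
    using mat_equivalent_zerofree[OF assms(1,3)] .
  show "concat_norm Z' = concat_norm Z"
    using mat_equivalent_concat_norm[OF assms(1)] assms(3) by (simp add: zerofree_def)
qed

section \<open>Sign normalisation\<close>

definition sign_vectors :: "('n \<Rightarrow> int) set" where
  "sign_vectors = {s. \<forall>i. s i = 1 \<or> s i = -1}"

definition sign_rescale :: "('n::finite \<Rightarrow> int) \<Rightarrow> ('n \<Rightarrow> int) \<Rightarrow> int^'n^'n \<Rightarrow> int^'n^'n" where
  "sign_rescale u v B = (\<chi> i j. u i * v j * B $ i $ j)"

lemma sign_vectorsD:
  assumes "s \<in> sign_vectors"
  shows "\<bar>s i\<bar> = 1" "s i * s i = 1"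
proof -
  have "s i = 1 \<or> s i = -1" using assms by (simp add: sign_vectors_def)
  then show "\<bar>s i\<bar> = 1" "s i * s i = 1" by auto
qed

lemma mat_equivalent_sign_rescale:
  assumes "u \<in> sign_vectors" "v \<in> sign_vectors"
  shows "mat_equivalent B (sign_rescale u v B)"
  unfolding mat_equivalent_iff
  using assms
  by (intro exI[of _ id] exI[of _ u] exI[of _ v]) (simp add: sign_vectors_def sign_rescale_def)

lemma sign_rescale_sign_rescale:
  assumes "u \<in> sign_vectors" "v \<in> sign_vectors"
  shows "sign_rescale u v (sign_rescale u v B) = B"
  using sign_vectorsD(2)[OF assms(1)] sign_vectorsD(2)[OF assms(2)]
  by (simp add: sign_rescale_def vec_eq_iff algebra_simps)

lemma sign_normal_form:
  fixes A :: "int^'n^'n" and k :: 'n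
  assumes "\<forall>i j. A $ i $ j \<noteq> 0"
  obtains u v B where "u \<in> sign_vectors" "v \<in> sign_vectors" "u k = 1"
    "\<forall>j. B $ k $ j > 0" "\<forall>i. B $ i $ k > 0" "A = sign_rescale u v B"
proof -
  define u where "u i = sgn (A $ i $ k) * sgn (A $ k $ k)" for i
  define v where "v j = sgn (A $ k $ j)" for j
  have uv: "u \<in> sign_vectors" "v \<in> sign_vectors"
    using assms by (auto simp: sign_vectors_def u_def v_def sgn_if)
  let ?B = "sign_rescale u v A"
  show ?thesis
  proof
    show "u k = 1"
      using assms by (simp add: u_def sgn_if)
    show "\<forall>j. ?B $ k $ j > 0" "\<forall>i. ?B $ i $ k > 0"
      using assms by (auto simp: sign_rescale_def u_def v_def sgn_if linorder_neq_iff)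
    show "A = sign_rescale u v ?B"
      by (simp add: sign_rescale_sign_rescale uv)
  qed (use uv in auto)
qed

(* Fixing the sign u k removes the ambiguity between (u, v) and (-u, -v). *)
lemma inj_on_sign_rescale:
  fixes k :: "'n::finite"
  shows "inj_on (\<lambda>(B, u, v). sign_rescale u v B)
    ({B :: int^'n^'n. \<forall>i j. B $ i $ j > 0} \<times> {u \<in> sign_vectors. u k = 1} \<times> sign_vectors)"
proof (rule inj_onI, clarsimp)
  fix B B' :: "int^'n^'n" and u v u' v'
  assume pos: "\<forall>i j. 0 < B $ i $ j" "\<forall>i j. 0 < B' $ i $ j"
    and signs: "u \<in> sign_vectors" "v \<in> sign_vectors" "u' \<in> sign_vectors" "v' \<in> sign_vectors"
    and pinned: "u k = 1" "u' k = 1"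
    and eq: "sign_rescale u v B = sign_rescale u' v' B'"
  have entry: "u i * v j * B $ i $ j = u' i * v' j * B' $ i $ j" for i j
    using eq by (simp add: sign_rescale_def vec_eq_iff)
  have "\<bar>B $ i $ j\<bar> = \<bar>B' $ i $ j\<bar>" for i j
    using arg_cong[OF entry[of i j], of abs] by (simp add: abs_mult sign_vectorsD signs)
  then have same_entries: "B $ i $ j = B' $ i $ j" for i j
    using pos by (simp add: abs_of_pos)
  have same_signs: "u i * v j = u' i * v' j" for i j
    using entry[of i j] pos(2)[rule_format, of i j] by (simp add: same_entries)
  have "v = v'"
    using same_signs[of k] pinned by auto
  moreover have "u = u'"
  proof
    fix i
    have "v k \<noteq> 0" using sign_vectorsD(1)[OF signs(2), of k] by auto
    then show "u i = u' i" using same_signs[of i k] \<open>v = v'\<close> by simp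
  qed
  moreover have "B = B'"
    by (simp add: vec_eq_iff same_entries)
  ultimately show "B = B' \<and> u = u' \<and> v = v'"
    by blast
qed

lemma sign_vectors_PiE: "sign_vectors = UNIV \<rightarrow>\<^sub>E {1, -1 :: int}"
  by (auto simp: sign_vectors_def PiE_UNIV_domain)

lemma card_sign_vectors: "card (sign_vectors :: ('n::finite \<Rightarrow> int) set) = 2 ^ CARD('n)"
  by (simp add: sign_vectors_PiE card_PiE numeral_2_eq_2)

lemma card_pinned_sign_vectors:
  fixes k :: "'n::finite"
  shows "card {u \<in> sign_vectors. u k = 1} = 2 ^ (CARD('n) - 1)"
proof -
  have "u \<in> sign_vectors \<and> u k = 1 \<longleftrightarrow> (\<forall>i. u i \<in> (if i = k then {1} else {1, -1}))"
    for u :: "'n \<Rightarrow> int"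
  proof
    assume "u \<in> sign_vectors \<and> u k = 1"
    then show "\<forall>i. u i \<in> (if i = k then {1} else {1, -1})"
      by (auto simp: sign_vectors_def)
  next
    assume A: "\<forall>i. u i \<in> (if i = k then {1} else {1, -1})"
    have "u i = 1 \<or> u i = -1" for i
      using A[rule_format, of i] by (auto split: if_splits)
    moreover have "u k = 1"
      using A[rule_format, of k] by simp
    ultimately show "u \<in> sign_vectors \<and> u k = 1"
      by (simp add: sign_vectors_def)
  qed
  then have "{u \<in> sign_vectors. u k = 1} = (\<Pi>\<^sub>E i\<in>UNIV. if i = k then {1} else {1, -1 :: int})"
    by (simp add: set_eq_iff PiE_UNIV_domain Pi_iff)
  moreover have "(\<Prod>i\<in>UNIV. card (if i = k then {1} else {1, -1 :: int})) =
      (\<Prod>i\<in>UNIV. if i = k then 1 else 2)"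
    by (rule prod.cong) auto
  moreover have "(\<Prod>i\<in>UNIV. if i = k then 1 else 2 :: nat) = 2 ^ (CARD('n) - 1)"
    by (simp add: prod.If_cases Compl_eq_Diff_UNIV card_Diff_singleton)
  ultimately show ?thesis by (simp add: card_PiE)
qed

section \<open>Unimodular 3x3 matrices of norm at most 3\<close>

definition mat3 :: "int \<Rightarrow> int \<Rightarrow> int \<Rightarrow> int \<Rightarrow> int \<Rightarrow> int \<Rightarrow> int \<Rightarrow> int \<Rightarrow> int \<Rightarrow> int^3^3" where
  "mat3 a b c d e f g h i = vector [vector [a, b, c], vector [d, e, f], vector [g, h, i]]"

lemma mat3_nth [simp]:
  "mat3 a b c d e f g h i $ 1 $ 1 = a" "mat3 a b c d e f g h i $ 1 $ 2 = b" "mat3 a b c d e f g h i $ 1 $ 3 = c"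
  "mat3 a b c d e f g h i $ 2 $ 1 = d" "mat3 a b c d e f g h i $ 2 $ 2 = e" "mat3 a b c d e f g h i $ 2 $ 3 = f"
  "mat3 a b c d e f g h i $ 3 $ 1 = g" "mat3 a b c d e f g h i $ 3 $ 2 = h" "mat3 a b c d e f g h i $ 3 $ 3 = i"
  by (simp_all add: mat3_def)

lemma mat3_eta: "M = mat3 (M$1$1) (M$1$2) (M$1$3) (M$2$1) (M$2$2) (M$2$3) (M$3$1) (M$3$2) (M$3$3)"
  by (simp add: vec_eq_iff forall_3)

lemma mat3_eq_iff:
  "mat3 a b c d e f g h i = mat3 a' b' c' d' e' f' g' h' i' \<longleftrightarrow>
    a = a' \<and> b = b' \<and> c = c' \<and> d = d' \<and> e = e' \<and> f = f' \<and> g = g' \<and> h = h' \<and> i = i'"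
  by (auto simp: vec_eq_iff forall_3)

lemma det_mat3 [simp]:
  "det (mat3 a b c d e f g h i) = a*e*i + b*f*g + c*d*h - a*f*h - b*d*i - c*e*g"
  by (simp add: det_3)

lemma mat3_mult:
  "mat3 a b c d e f g h i ** mat3 a' b' c' d' e' f' g' h' i' =
    mat3 (a*a' + b*d' + c*g') (a*b' + b*e' + c*h') (a*c' + b*f' + c*i')
         (d*a' + e*d' + f*g') (d*b' + e*e' + f*h') (d*c' + e*f' + f*i')
         (g*a' + h*d' + i*g') (g*b' + h*e' + i*h') (g*c' + h*f' + i*i')"
  by (simp add: vec_eq_iff forall_3 matrix_matrix_mult_def sum_3)

lemma mat_1_eq_mat3: "(mat 1 :: int^3^3) = mat3 1 0 0 0 1 0 0 0 1"
  by (simp add: vec_eq_iff forall_3 mat_def)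

lemma mat3_adjugate_inverse:
  assumes "det (mat3 a b c d e f g h i) = D" "D = 1 \<or> D = -1"
  defines "A \<equiv> mat3 (D*(e*i - f*h)) (D*(c*h - b*i)) (D*(b*f - c*e))
                    (D*(f*g - d*i)) (D*(a*i - c*g)) (D*(c*d - a*f))
                    (D*(d*h - e*g)) (D*(b*g - a*h)) (D*(a*e - b*d))"
  shows "mat3 a b c d e f g h i ** A = mat 1" "A ** mat3 a b c d e f g h i = mat 1"
proof -
  have "D * (a*e*i + b*f*g + c*d*h - a*f*h - b*d*i - c*e*g) = 1"
    using assms(1,2) by auto
  then show "mat3 a b c d e f g h i ** A = mat 1" "A ** mat3 a b c d e f g h i = mat 1"
    unfolding A_def mat3_mult mat_1_eq_mat3 mat3_eq_iff by (auto simp: algebra_simps)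
qed

definition small_ints :: "int list" where
  "small_ints = [-3, -2, -1, 1, 2, 3]"

lemma in_set_small_ints: "x \<in> set small_ints \<longleftrightarrow> x \<noteq> 0 \<and> \<bar>x\<bar> \<le> 3"
  by (auto simp: small_ints_def)

(* Each 2x2 minor is tested as soon as its entries are chosen; this keeps the search small. *)
definition normal_minimizer_search :: "(int^3^3) list" where
  "normal_minimizer_search =
    [mat3 a b c d e f g h i.
      a \<leftarrow> [1, 2, 3], b \<leftarrow> [1, 2, 3], c \<leftarrow> [1, 2, 3], d \<leftarrow> [1, 2, 3],
      e \<leftarrow> small_ints, a*e - b*d \<in> set small_ints,
      f \<leftarrow> small_ints, c*d - a*f \<in> set small_ints, b*f - c*e \<in> set small_ints,
      g \<leftarrow> [1, 2, 3], h \<leftarrow> small_ints, d*h - e*g \<in> set small_ints, b*g - a*h \<in> set small_ints,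
      i \<leftarrow> small_ints, e*i - f*h \<in> set small_ints, c*h - b*i \<in> set small_ints,
      f*g - d*i \<in> set small_ints, a*i - c*g \<in> set small_ints,
      det (mat3 a b c d e f g h i) \<in> {1, -1}]"

lemma in_set_concat_map_iff: "x \<in> set (concat (map f xs)) \<longleftrightarrow> (\<exists>y \<in> set xs. x \<in> set (f y))"
  by auto

lemma in_set_if_Nil_iff: "x \<in> set (if P then xs else []) \<longleftrightarrow> P \<and> x \<in> set xs"
  by auto

lemma in_normal_minimizer_search:
  assumes "a \<in> {1, 2, 3}" "b \<in> {1, 2, 3}" "c \<in> {1, 2, 3}" "d \<in> {1, 2, 3}" "g \<in> {1, 2, 3}"
    "e \<in> set small_ints" "f \<in> set small_ints" "h \<in> set small_ints" "i \<in> set small_ints"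
    "e*i - f*h \<in> set small_ints" "c*h - b*i \<in> set small_ints" "b*f - c*e \<in> set small_ints"
    "f*g - d*i \<in> set small_ints" "a*i - c*g \<in> set small_ints" "c*d - a*f \<in> set small_ints"
    "d*h - e*g \<in> set small_ints" "b*g - a*h \<in> set small_ints" "a*e - b*d \<in> set small_ints"
    "det (mat3 a b c d e f g h i) \<in> {1, -1}"
  shows "mat3 a b c d e f g h i \<in> set normal_minimizer_search"
  unfolding normal_minimizer_search_def
  by (simp only: in_set_concat_map_iff in_set_if_Nil_iff list.set singleton_iff) (use assms in blast)

lemma sign_mult_in_set_small_ints:
  assumes "D = 1 \<or> D = -1"
  shows "D * x \<in> set small_ints \<longleftrightarrow> x \<in> set small_ints"
  using assms by (auto simp: in_set_small_ints abs_mult)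

lemma normal_minimizer_search_complete:
  assumes "unimodular B" "zerofree B" "concat_norm B \<le> 3"
    and pos: "\<forall>j. B $ 1 $ j > 0" "\<forall>i. B $ i $ 1 > 0"
  shows "B \<in> set normal_minimizer_search"
proof -
  obtain a b c d e f g h i where B: "B = mat3 a b c d e f g h i"
    by (rule that[OF mat3_eta])
  define D where "D = det B"
  have D: "D = 1 \<or> D = -1"
    using assms(1) by (simp add: D_def unimodular_def)
  have inv: "matrix_inv (mat3 a b c d e f g h i) =
    mat3 (D*(e*i - f*h)) (D*(c*h - b*i)) (D*(b*f - c*e))
         (D*(f*g - d*i)) (D*(a*i - c*g)) (D*(c*d - a*f))
         (D*(d*h - e*g)) (D*(b*g - a*h)) (D*(a*e - b*d))"
    by (rule matrix_inv_eqI; rule mat3_adjugate_inverse) (use D D_def B in auto)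
  have small: "\<forall>k l. B $ k $ l \<in> set small_ints \<and> matrix_inv B $ k $ l \<in> set small_ints"
    using assms(2,3) by (auto simp: zerofree_def concat_norm_le_iff in_set_small_ints)
  have first_row_col: "\<forall>k l. B $ 1 $ l \<in> {1, 2, 3} \<and> B $ k $ 1 \<in> {1, 2, 3}"
  proof (intro allI)
    fix k l
    show "B $ 1 $ l \<in> {1, 2, 3} \<and> B $ k $ 1 \<in> {1, 2, 3}"
      using small[rule_format, of 1 l] small[rule_format, of k 1] pos(1)[rule_format, of l]
        pos(2)[rule_format, of k]
      by (auto simp: in_set_small_ints)
  qed
  have det: "det (mat3 a b c d e f g h i) \<in> {1, -1}"
    using D by (simp add: D_def B del: det_mat3)
  show ?thesis
    using small first_row_col det
    unfolding B inv forall_3 mat3_nth sign_mult_in_set_small_ints[OF D]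
    by (elim conjE) (rule in_normal_minimizer_search; assumption)
qed

section \<open>The minimizers\<close>

lemma M0_eq_mat3: "M0 = mat3 1 2 2 2 1 2 2 2 3"
  unfolding M0_def mat3_def ..

lemma vec_lambda_eq_mat3:
  "(\<chi> i j. F i j) = mat3 (F 1 1) (F 1 2) (F 1 3) (F 2 1) (F 2 2) (F 2 3) (F 3 1) (F 3 2) (F 3 3)"
  by (simp add: vec_eq_iff forall_3)

definition permutations3 :: "(3^3) list" where
  "permutations3 = [vector [1, 2, 3], vector [1, 3, 2], vector [2, 1, 3],
                    vector [2, 3, 1], vector [3, 1, 2], vector [3, 2, 1]]"

(* Every matrix occurs twice: M0 is fixed by swapping both its first two rows and columns. *)
definition normal_minimizers :: "(int^3^3) list" where
  "normal_minimizers = [\<chi> i j. M0 $ (p $ i) $ (q $ j). p \<leftarrow> permutations3, q \<leftarrow> permutations3]"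

lemma normal_minimizer_search_subset: "set normal_minimizer_search \<subseteq> set normal_minimizers"
  by (simp add: normal_minimizer_search_def small_ints_def normal_minimizers_def permutations3_def
      vec_lambda_eq_mat3 M0_eq_mat3 mat3_eq_iff)

lemma card_normal_minimizers: "card (set normal_minimizers) = 18"
  by (simp add: normal_minimizers_def permutations3_def vec_lambda_eq_mat3 M0_eq_mat3 mat3_eq_iff
      card_insert_if)

lemma bij_permutations3:
  assumes "p \<in> set permutations3"
  shows "bij (($) p)"
proof -
  have "inj (($) p)"
    using assms by (auto simp: permutations3_def inj_def forall_3)
  then show ?thesis
    by (simp add: bij_def finite_UNIV_inj_surj)
qed

lemma normal_minimizers_equivalent_M0:
  assumes "N \<in> set normal_minimizers"
  shows "mat_equivalent N M0"
proof -
  obtain p q where pq: "p \<in> set permutations3" "q \<in> set permutations3"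
    and N: "N = (\<chi> i j. M0 $ (p $ i) $ (q $ j))"
    using assms unfolding normal_minimizers_def by auto
  have "mat_equivalent M0 N"
    unfolding mat_equivalent_iff using bij_permutations3[OF pq(1)] bij_permutations3[OF pq(2)]
    by (intro exI[of _ "($) p"] exI[of _ "($) q"] exI[of _ "\<lambda>_. 1"]) (simp add: N)
  then show ?thesis
    by (rule mat_equivalent_sym)
qed

lemma normal_minimizers_pos:
  assumes "N \<in> set normal_minimizers"
  shows "\<forall>i j. N $ i $ j > 0"
proof -
  have "M0 $ k $ l > 0" for k l
    using exhaust_3[of k] exhaust_3[of l] by (auto simp: M0_eq_mat3)
  then show ?thesis
    using assms unfolding normal_minimizers_def by auto
qed

lemma M0inv_eq_mat3: "M0inv = mat3 1 2 (-2) 2 1 (-2) (-2) (-2) 3"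
  unfolding M0inv_def mat3_def ..

lemma M0_mult_M0inv: "M0 ** M0inv = mat 1" "M0inv ** M0 = mat 1"
  by (simp_all add: M0_eq_mat3 M0inv_eq_mat3 mat3_mult mat_1_eq_mat3)

lemma matrix_inv_M0: "matrix_inv M0 = M0inv"
  using M0_mult_M0inv by (rule matrix_inv_eqI)

lemma M0_minimizer: "unimodular M0" "zerofree M0" "concat_norm M0 = 3"
proof -
  show "unimodular M0"
    by (simp add: unimodular_def M0_eq_mat3)
  show "zerofree M0"
    unfolding zerofree_def invertible_def matrix_inv_M0
    using M0_mult_M0inv by (auto simp: M0_eq_mat3 M0inv_eq_mat3 forall_3)
  have "concat_norm M0 \<le> 3"
    unfolding concat_norm_le_iff matrix_inv_M0 by (simp add: M0_eq_mat3 M0inv_eq_mat3 forall_3)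
  moreover have "3 \<le> concat_norm M0"
    using abs_entry_le_concat_norm[of M0 3 3] by (simp add: M0_eq_mat3)
  ultimately show "concat_norm M0 = 3"
    by simp
qed

lemma equivalent_M0_minimizer:
  assumes "mat_equivalent M M0"
  shows "unimodular M" "zerofree M" "concat_norm M = 3"
  using mat_equivalent_invariants[OF mat_equivalent_sym[OF assms] M0_minimizer(1,2)] M0_minimizer(3)
  by simp_all

lemma minimizer_normal_form:
  assumes "unimodular M" "zerofree M" "concat_norm M \<le> 3"
  obtains u v B where "u \<in> sign_vectors" "v \<in> sign_vectors" "u 1 = 1"
    "B \<in> set normal_minimizers" "M = sign_rescale u v B"
proof -
  have "\<forall>i j. M $ i $ j \<noteq> 0"
    using assms(2) by (simp add: zerofree_def)
  then obtain u v B where uv: "u \<in> sign_vectors" "v \<in> sign_vectors" "u 1 = 1"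
    and pos: "\<forall>j. B $ 1 $ j > 0" "\<forall>i. B $ i $ 1 > 0" and M: "M = sign_rescale u v B"
    by (rule sign_normal_form)
  have "mat_equivalent M B"
    using mat_equivalent_sign_rescale[OF uv(1,2), of M]
    by (simp add: M sign_rescale_sign_rescale uv(1,2))
  from mat_equivalent_invariants[OF this assms(1,2)] assms(3)
  have "B \<in> set normal_minimizer_search"
    by (intro normal_minimizer_search_complete pos) simp_all
  then have "B \<in> set normal_minimizers"
    using normal_minimizer_search_subset by blast
  then show ?thesis
    using uv M by (intro that)
qed

lemma concat_norm_le_3_imp_equivalent_M0:
  assumes "unimodular M" "zerofree M" "concat_norm M \<le> 3"
  shows "mat_equivalent M M0"
proof -
  obtain u v B where uv: "u \<in> sign_vectors" "v \<in> sign_vectors"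
    and B: "B \<in> set normal_minimizers" and M: "M = sign_rescale u v B"
    using minimizer_normal_form[OF assms] .
  have "mat_equivalent M B"
    using mat_equivalent_sym[OF mat_equivalent_sign_rescale[OF uv]] by (simp add: M)
  then show ?thesis
    using normal_minimizers_equivalent_M0[OF B] by (rule mat_equivalent_trans)
qed

lemma minimizers_eq_sign_rescale_image:
  "{M :: int^3^3. unimodular M \<and> zerofree M \<and> concat_norm M = 3} =
    (\<lambda>(B, u, v). sign_rescale u v B) `
      (set normal_minimizers \<times> {u \<in> sign_vectors. u 1 = 1} \<times> sign_vectors)"
  (is "?minimizers = ?rescale ` ?normal_forms")
proof (intro equalityI subsetI)
  fix M
  assume "M \<in> ?minimizers"
  then have "unimodular M" "zerofree M" "concat_norm M \<le> 3"
    by simp_all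
  then obtain u v B where "u \<in> sign_vectors" "v \<in> sign_vectors" "u 1 = 1"
    "B \<in> set normal_minimizers" "M = sign_rescale u v B"
    by (rule minimizer_normal_form)
  then show "M \<in> ?rescale ` ?normal_forms"
    by (intro image_eqI[of _ _ "(B, u, v)"]) simp_all
next
  fix M
  assume "M \<in> ?rescale ` ?normal_forms"
  then obtain B u v where B: "B \<in> set normal_minimizers"
    and uv: "u \<in> sign_vectors" "v \<in> sign_vectors" and M: "M = sign_rescale u v B"
    by auto
  have "mat_equivalent M M0"
    using mat_equivalent_sym[OF mat_equivalent_sign_rescale[OF uv]] normal_minimizers_equivalent_M0[OF B]
    unfolding M by (rule mat_equivalent_trans)
  then show "M \<in> ?minimizers"
    using equivalent_M0_minimizer by blast
qed

lemma card_minimizers: "card {M :: int^3^3. unimodular M \<and> zerofree M \<and> concat_norm M = 3} = 576"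
proof -
  have "inj_on (\<lambda>(B, u, v). sign_rescale u v B)
      (set normal_minimizers \<times> {u \<in> sign_vectors. u (1::3) = 1} \<times> sign_vectors)"
    by (rule inj_on_subset[OF inj_on_sign_rescale]) (use normal_minimizers_pos in auto)
  then show ?thesis
    by (simp add: minimizers_eq_sign_rescale_image card_image card_cartesian_product
        card_normal_minimizers card_pinned_sign_vectors card_sign_vectors)
qed

theorem mainTheorem8:
  shows "(\<forall>M::int^3^3. unimodular M \<and> zerofree M \<longrightarrow> 3 \<le> concat_norm M)
    \<and> unimodular M0 \<and> zerofree M0 \<and> concat_norm M0 = 3 \<and> matrix_inv M0 = M0inv
    \<and> card {M::int^3^3. unimodular M \<and> zerofree M \<and> concat_norm M = 3} = 576
    \<and> (\<forall>M::int^3^3. unimodular M \<and> zerofree M \<and> concat_norm M = 3 \<longrightarrow> mat_equivalent M M0)"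
proof (intro conjI allI impI)
  fix M :: "int^3^3"
  assume M: "unimodular M \<and> zerofree M"
  show "3 \<le> concat_norm M"
  proof (cases "concat_norm M \<le> 3")
    case True
    then have "mat_equivalent M M0"
      using M by (intro concat_norm_le_3_imp_equivalent_M0) simp_all
    then show ?thesis
      by (simp add: equivalent_M0_minimizer(3))
  qed simp
next
  fix M :: "int^3^3"
  assume "unimodular M \<and> zerofree M \<and> concat_norm M = 3"
  then show "mat_equivalent M M0"
    by (intro concat_norm_le_3_imp_equivalent_M0) simp_all
qed (simp_all add: M0_minimizer matrix_inv_M0 card_minimizers)

end
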